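(* Let $E, F$ be Banach lattices and $T: E \to F$ a bounded linear operator such that $T': F' \to E'$ maps disjoint sequences onto disjoint sequences. If $A \subset E$ is almost Grothendieck, then $T(A)$ is almost Grothendieck in $F$.
   Context: For a Banach lattice $G$, every bounded linear operator $S: G \to c_0$ has the form $S(x) = (x_n'(x))_n$ for a unique weak* null sequence $(x_n') \subset G'$; $S$ is a disjoint operator if $(x_n')$ is disjoint in $G'$. A subset $A \subset G$ is almost Grothendieck if $S(A)$ is relatively weakly compact in $c_0$ for every disjoint operator $S: G \to c_0$. *)

theory Defs
  imports "HOL-Analysis.Analysis"
begin

class banach_lattice = banach + ordered_real_vector + lattice +
  assumes lattice_norm_mono: "sup x (- x) \<le> sup y (- y) \<Longrightarrow> norm x \<le> norm y"

definition labs :: "'a::banach_lattice \<Rightarrow> 'a" where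
  "labs x = sup x (- x)"

text \<open>Elements of the dual E' are bounded linear functionals E \<Rightarrow> real.
  Lattice operations of the dual are given by the Riesz--Kantorovich formulas
  (evaluated at positive elements, which determines them):
  abs f (x) = sup { abs (f z) : abs z \<le> x },
  (f inf g)(x) = inf { f y + g (x - y) : 0 \<le> y \<le> x }.\<close>

definition dual_abs :: "('a::banach_lattice \<Rightarrow> real) \<Rightarrow> 'a \<Rightarrow> real" where
  "dual_abs f x = Sup {\<bar>f z\<bar> | z. labs z \<le> x}"

definition dual_inf :: "('a::banach_lattice \<Rightarrow> real) \<Rightarrow> ('a \<Rightarrow> real) \<Rightarrow> 'a \<Rightarrow> real" where
  "dual_inf f g x = Inf {f y + g (x - y) | y. 0 \<le> y \<and> y \<le> x}"

definition dual_disjoint :: "('a::banach_lattice \<Rightarrow> real) \<Rightarrow> ('a \<Rightarrow> real) \<Rightarrow> bool" where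
  "dual_disjoint f g \<longleftrightarrow> (\<forall>x. 0 \<le> x \<longrightarrow> dual_inf (dual_abs f) (dual_abs g) x = 0)"

definition disjoint_dual_seq :: "(nat \<Rightarrow> 'a::banach_lattice \<Rightarrow> real) \<Rightarrow> bool" where
  "disjoint_dual_seq f \<longleftrightarrow> (\<forall>n m. n \<noteq> m \<longrightarrow> dual_disjoint (f n) (f m))"

definition c0_set :: "(nat \<Rightarrow> real) set" where
  "c0_set = {x. x \<longlonglongrightarrow> 0}"

definition c0_norm :: "(nat \<Rightarrow> real) \<Rightarrow> real" where
  "c0_norm x = (SUP n. \<bar>x n\<bar>)"

definition c0_dual :: "((nat \<Rightarrow> real) \<Rightarrow> real) \<Rightarrow> bool" where
  "c0_dual \<phi> \<longleftrightarrow>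
     (\<forall>x\<in>c0_set. \<forall>y\<in>c0_set. \<phi> (\<lambda>n. x n + y n) = \<phi> x + \<phi> y) \<and>
     (\<forall>a. \<forall>x\<in>c0_set. \<phi> (\<lambda>n. a * x n) = a * \<phi> x) \<and>
     (\<exists>K. \<forall>x\<in>c0_set. \<bar>\<phi> x\<bar> \<le> K * c0_norm x)"

definition c0_weak :: "(nat \<Rightarrow> real) topology" where
  "c0_weak = topology_generated_by {{x \<in> c0_set. \<phi> x \<in> U} | \<phi> U. c0_dual \<phi> \<and> open U}"

definition rel_weakly_compact_c0 :: "(nat \<Rightarrow> real) set \<Rightarrow> bool" where
  "rel_weakly_compact_c0 B \<longleftrightarrow> B \<subseteq> c0_set \<and> compactin c0_weak (c0_weak closure_of B)"

text \<open>A bounded operator S : G \<rightarrow> c_0 is S x = (f n x)_n for a weak* null sequence (f n)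
  in G'; it is a disjoint operator if (f n) is disjoint in G'.\<close>

definition almost_grothendieck :: "'a::banach_lattice set \<Rightarrow> bool" where
  "almost_grothendieck A \<longleftrightarrow>
     (\<forall>f :: nat \<Rightarrow> 'a \<Rightarrow> real.
        (\<forall>n. bounded_linear (f n)) \<and> (\<forall>x. (\<lambda>n. f n x) \<longlonglongrightarrow> 0) \<and> disjoint_dual_seq f
        \<longrightarrow> rel_weakly_compact_c0 ((\<lambda>x. (\<lambda>n. f n x)) ` A))"

end

theory Submission
  imports Defs
begin

lemma almost_grothendieckI:
  assumes "\<And>f :: nat \<Rightarrow> 'a::banach_lattice \<Rightarrow> real.
             (\<And>n. bounded_linear (f n)) \<Longrightarrow> (\<And>x. (\<lambda>n. f n x) \<longlonglongrightarrow> 0) \<Longrightarrow>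
             disjoint_dual_seq f \<Longrightarrow> rel_weakly_compact_c0 ((\<lambda>x n. f n x) ` A)"
  shows "almost_grothendieck A"
  using assms unfolding almost_grothendieck_def by blast

lemma almost_grothendieckD:
  assumes "almost_grothendieck A"
    and "\<And>n. bounded_linear (f n)" and "\<And>x. (\<lambda>n. f n x) \<longlonglongrightarrow> 0" and "disjoint_dual_seq f"
  shows "rel_weakly_compact_c0 ((\<lambda>x n. f n x) ` A)"
  using assms unfolding almost_grothendieck_def by blast

theorem mainTheorem14:
  fixes T :: "'e::banach_lattice \<Rightarrow> 'f::banach_lattice"
    and A :: "'e set"
  assumes "bounded_linear T"
    and "\<forall>g :: nat \<Rightarrow> 'f \<Rightarrow> real.
           (\<forall>n. bounded_linear (g n)) \<and> disjoint_dual_seq g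
           \<longrightarrow> disjoint_dual_seq (\<lambda>n. g n \<circ> T)"
    and "almost_grothendieck A"
  shows "almost_grothendieck (T ` A)"
proof (rule almost_grothendieckI)
  fix f :: "nat \<Rightarrow> 'f \<Rightarrow> real"
  assume bounded: "\<And>n. bounded_linear (f n)"
    and weak_star_null: "\<And>y. (\<lambda>n. f n y) \<longlonglongrightarrow> 0"
    and disjoint: "disjoint_dual_seq f"
  have "\<And>n. bounded_linear (f n \<circ> T)"
    using bounded_linear_compose[OF bounded assms(1)] by (simp add: comp_def)
  moreover have "\<And>x. (\<lambda>n. (f n \<circ> T) x) \<longlonglongrightarrow> 0"
    using weak_star_null by simp
  moreover have "disjoint_dual_seq (\<lambda>n. f n \<circ> T)"
    using assms(2) bounded disjoint by blast
  ultimately have "rel_weakly_compact_c0 ((\<lambda>x n. (f n \<circ> T) x) ` A)"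
    by (rule almost_grothendieckD[OF assms(3)])
  then show "rel_weakly_compact_c0 ((\<lambda>x n. f n x) ` (T ` A))"
    by (simp add: image_image)
qed

end
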